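(* Let $d\in\mathbb{N}$, $R\in(0,\infty]$, $\varphi\colon[0,R)\to\mathbb{R}$ strictly increasing and convex, $G=\mathring{B}^{(d)}_R=\{x\in\mathbb{R}^d:|x|<R\}$, and $\rho\colon G\to(0,\infty)$, $\rho(x)=\exp(-\varphi(|x|))$. Then for all $x,y\in G$, \[ W\big(U_\rho(x,\cdot),U_\rho(y,\cdot)\big)\le\frac{d}{d+1}\cdot\frac{1}{\lambda_d(B^{(d)}_1)^{1/d}}\int_0^1\Big|\ell_\rho(r\rho(x))^{1/d}-\ell_\rho(r\rho(y))^{1/d}\Big|\,\mathrm{d}r, \] where $\ell_\rho(t)=\lambda_d(G(t))$ is the level-set function of $\rho$.
   Context: $B^{(d)}_1$ is the closed Euclidean unit ball in $\mathbb{R}^d$, $\lambda_d$ Lebesgue measure, $|\cdot|$ Euclidean norm. $G(t)=\{x\in G:\rho(x)\ge t\}$, $U_t$ is the uniform distribution on $G(t)$, and the simple slice sampling kernel is $U_\rho(x,A)=\frac{1}{\rho(x)}\int_0^{\rho(x)}U_t(A)\,\mathrm{d}t$. $W(\mu,\nu)=\inf_\gamma\int|x-y|\,\mathrm{d}\gamma(x,y)$ over couplings $\gamma$ of $\mu,\nu$ is the Wasserstein distance w.r.t. the Euclidean norm. *)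

theory Defs
  imports "HOL-Analysis.Analysis"
begin

definition level_set :: "'a set \<Rightarrow> ('a \<Rightarrow> real) \<Rightarrow> real \<Rightarrow> 'a set" where
  "level_set G \<rho> t = {x \<in> G. \<rho> x \<ge> t}"

definition unif_level :: "('a::euclidean_space) set \<Rightarrow> ('a \<Rightarrow> real) \<Rightarrow> real \<Rightarrow> 'a measure" where
  "unif_level G \<rho> t = uniform_measure lborel (level_set G \<rho> t)"

definition slice_kernel :: "('a::euclidean_space) set \<Rightarrow> ('a \<Rightarrow> real) \<Rightarrow> 'a \<Rightarrow> 'a measure" where
  "slice_kernel G \<rho> x = measure_of UNIV (sets borel)
     (\<lambda>A. ennreal (1 / \<rho> x) * (\<integral>\<^sup>+ t \<in> {0..\<rho> x}. emeasure (unif_level G \<rho> t) A \<partial>lborel))"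

definition couplings :: "('a::euclidean_space) measure \<Rightarrow> 'a measure \<Rightarrow> ('a \<times> 'a) measure set" where
  "couplings \<mu> \<nu> = {\<gamma>. sets \<gamma> = sets (borel \<Otimes>\<^sub>M borel) \<and>
       distr \<gamma> borel fst = \<mu> \<and> distr \<gamma> borel snd = \<nu>}"

definition wasserstein :: "('a::euclidean_space) measure \<Rightarrow> 'a measure \<Rightarrow> ennreal" where
  "wasserstein \<mu> \<nu> = (INF \<gamma> \<in> couplings \<mu> \<nu>. \<integral>\<^sup>+ p. ennreal (norm (fst p - snd p)) \<partial>\<gamma>)"

definition level_fun :: "('a::euclidean_space) set \<Rightarrow> ('a \<Rightarrow> real) \<Rightarrow> real \<Rightarrow> real" where
  "level_fun G \<rho> t = measure lborel (level_set G \<rho> t)"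

end

theory Submission
  imports Defs "HOL-Probability.Probability_Measure"
begin

(* The super-level sets G(t) of the radially decreasing density rho are centred balls, open or
   closed; only the top level t = rho 0 may degenerate to the point 0. Hence U_t is the image of
   the uniform distribution on the unit ball under scaling by a(t) = (l_rho(t) / lambda_d(B_1))^(1/d),
   and the substitution t = r rho(x) in the definition of the kernel shows that U_rho(x, .) is the
   law of a(r rho(x)) u for (r, u) uniform on [0,1] times the unit ball. Driving both kernels by the
   same (r, u) gives a coupling whose cost is E|a(r rho(x)) - a(r rho(y))| E|u|, and E|u| = d/(d+1).
   Convexity of phi enters only to make the level sets bounded when R is infinite and to exclude a
   jump of phi at 0. *)

section \<open>Uniform distributions on balls\<close>

lemma unit_ball_vol_nonzero [simp]: "n \<ge> 0 \<Longrightarrow> unit_ball_vol n \<noteq> 0"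
  using unit_ball_vol_pos[of n] by linarith

lemma ennreal_mult_divide_mult_cancel_left:
  fixes a b c :: ennreal
  assumes "c \<noteq> 0" "c \<noteq> \<infinity>"
  shows "(c * a) / (c * b) = a / b"
proof -
  have "inverse (c * b) = inverse c * inverse b"
    using assms by (intro ennreal_inverse_mult') (auto simp: top.not_eq_extremum zero_less_iff_neq_zero)
  then have "(c * a) / (c * b) = (c / c) * (a / b)"
    by (simp add: divide_ennreal_def ac_simps)
  then show ?thesis
    using assms by (simp add: top.not_eq_extremum)
qed

lemma emeasure_lborel_eq_scaleR_vimage:
  fixes S :: "'a::euclidean_space set"
  assumes "m > 0" and "S \<in> sets borel"
  shows "emeasure lborel S = ennreal (m ^ DIM('a)) * emeasure lborel ((\<lambda>x. m *\<^sub>R x) -` S)"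
proof -
  have "emeasure lborel S
      = emeasure (density (distr lborel borel (\<lambda>x. (0::'a) + m *\<^sub>R x)) (\<lambda>_. \<bar>m\<bar> ^ DIM('a))) S"
    using lborel_affine[of m "0::'a"] assms(1) by simp
  then show ?thesis
    using assms by (simp add: emeasure_density emeasure_distr nn_integral_cmult_indicator)
qed

lemma emeasure_lborel_Int_eq_cball:
  fixes D :: "'a::euclidean_space set"
  assumes "ball 0 m \<subseteq> D" "D \<subseteq> cball 0 m" "D \<in> sets borel" "A \<in> sets borel"
  shows "emeasure lborel (D \<inter> A) = emeasure lborel (cball 0 m \<inter> A)"
proof -
  have "sphere (0::'a) m \<in> null_sets lborel"
    using negligible_sphere[of "0::'a" m]
    by (auto simp: null_sets_completion_iff negligible_iff_null_sets negligible_convex_frontier)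
  moreover have "(cball 0 m - D) \<inter> A \<subseteq> sphere 0 m"
    using assms(1) by (force simp: subset_iff)
  ultimately have "(cball 0 m - D) \<inter> A \<in> null_sets lborel"
    using assms(3,4) by (auto intro: null_sets_subset)
  moreover have "cball 0 m \<inter> A = (D \<inter> A) \<union> ((cball 0 m - D) \<inter> A)"
    using assms(2) by auto
  ultimately show ?thesis
    using emeasure_Un_null_set[of "D \<inter> A"] assms(3,4) by simp
qed

lemma uniform_measure_eq_distr_scaleR_unit_ball:
  fixes D :: "'a::euclidean_space set"
  assumes m: "m > 0" and D: "ball 0 m \<subseteq> D" "D \<subseteq> cball 0 m" "D \<in> sets borel"
  shows "uniform_measure lborel D = distr (uniform_measure lborel (cball 0 1)) borel (\<lambda>u. m *\<^sub>R u)"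
proof (rule measure_eqI)
  fix A assume "A \<in> sets (uniform_measure lborel D)"
  then have A: "A \<in> sets borel" by simp
  define c where "c = ennreal (m ^ DIM('a))"
  define k where "k = ennreal (unit_ball_vol (real DIM('a)))"
  define X where "X = emeasure lborel (cball 0 1 \<inter> (\<lambda>x. m *\<^sub>R x) -` A)"
  have c: "c \<noteq> 0" "c \<noteq> \<infinity>"
    using m by (simp_all add: c_def)
  have "(\<lambda>x. m *\<^sub>R x) -` (cball 0 m \<inter> A) = cball 0 1 \<inter> (\<lambda>x. m *\<^sub>R x) -` A"
    using m by (auto simp: dist_norm)
  then have DA: "emeasure lborel (D \<inter> A) = c * X"
    using emeasure_lborel_Int_eq_cball[OF D A] emeasure_lborel_eq_scaleR_vimage[OF m, of "cball 0 m \<inter> A"] A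
    by (simp add: c_def X_def)
  have "emeasure lborel D = c * k"
    using emeasure_lborel_Int_eq_cball[OF D, of UNIV] emeasure_cball[of m "0::'a"] m
    by (simp add: c_def k_def ennreal_mult mult.commute)
  then have "emeasure (uniform_measure lborel D) A = (c * X) / (c * k)"
    using A D(3) DA by simp
  also have "\<dots> = X / k"
    using c by (rule ennreal_mult_divide_mult_cancel_left)
  also have "\<dots> = emeasure (distr (uniform_measure lborel (cball 0 1)) borel (\<lambda>u. m *\<^sub>R u)) A"
    using A measurable_sets_borel[of "\<lambda>u::'a. m *\<^sub>R u" borel A] emeasure_cball[of 1 "0::'a"]
    by (simp add: emeasure_distr X_def k_def)
  finally show "emeasure (uniform_measure lborel D) A
      = emeasure (distr (uniform_measure lborel (cball 0 1)) borel (\<lambda>u. m *\<^sub>R u)) A" .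
qed simp

lemma nn_integral_one_minus_power:
  fixes k :: real assumes k: "k \<ge> 0"
  shows "(\<integral>\<^sup>+s. ennreal (k * (1 - s ^ d)) * indicator {0..1} s \<partial>lborel) = ennreal (k * (real d / (real d + 1)))"
proof -
  let ?F = "\<lambda>s::real. k * (s - s ^ (d + 1) / (real d + 1))"
  have "(\<integral>\<^sup>+s. ennreal (k * (1 - s ^ d)) * indicator {0..1} s \<partial>lborel) = ?F 1 - ?F 0"
  proof (rule nn_integral_FTC_Icc)
    fix x :: real assume x: "x \<in> {0..1}"
    have "DERIV (\<lambda>s. s ^ (d + 1)) x :> real (d + 1) * x ^ d"
      using DERIV_pow[of "d + 1" x] by simp
    then have "DERIV ?F x :> k * (1 - (real (d + 1) * x ^ d) / (real d + 1))"
      by (intro DERIV_cmult DERIV_diff DERIV_ident DERIV_cdivide)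
    moreover have "k * (1 - (real (d + 1) * x ^ d) / (real d + 1)) = k * (1 - x ^ d)"
      by (simp add: field_simps)
    ultimately show "DERIV ?F x :> k * (1 - x ^ d)"
      by metis
    have "x ^ d \<le> 1"
      using x by (auto intro: power_le_one)
    then show "0 \<le> k * (1 - x ^ d)"
      using k by simp
  qed simp_all
  also have "?F 1 - ?F 0 = k * (real d / (real d + 1))"
    by (simp add: field_simps)
  finally show ?thesis .
qed

(* Layer cake: norm u is the length of {s. 0 <= s < norm u}; after swapping the integrals the
   inner integral is the volume of the shell between radius s and 1. *)
lemma nn_integral_norm_uniform_unit_ball:
  "(\<integral>\<^sup>+u. ennreal (norm u) \<partial>uniform_measure lborel (cball (0::'a::euclidean_space) 1))
     = ennreal (real DIM('a) / (real DIM('a) + 1))"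
proof -
  define k where "k = unit_ball_vol (real DIM('a))"
  have k: "k > 0" unfolding k_def by simp
  define f where "f = (\<lambda>(u::'a) (s::real). indicator {p. 0 \<le> snd p \<and> snd p < norm (fst p) \<and> norm (fst p) \<le> 1} (u, s) :: ennreal)"
  have f_measurable: "case_prod f \<in> borel_measurable (lborel \<Otimes>\<^sub>M lborel)"
    unfolding f_def by measurable
  have norm_layers: "(\<integral>\<^sup>+s. f u s \<partial>lborel) = ennreal (norm u) * indicator (cball 0 1) u" for u
  proof -
    have "(\<lambda>s. f u s) = indicator (if norm u \<le> 1 then {0..<norm u} else {})"
      unfolding f_def by (auto simp: indicator_def fun_eq_iff)
    then show ?thesis by simp
  qed
  have shell_volume: "(\<integral>\<^sup>+u. f u s \<partial>lborel) = ennreal (k * (1 - s ^ DIM('a))) * indicator {0..1} s" for s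
  proof (cases "0 \<le> s \<and> s \<le> 1")
    case True
    have "(\<lambda>u. f u s) = indicator (cball 0 1 - cball 0 s)"
      unfolding f_def using True by (auto simp: indicator_def fun_eq_iff)
    then have "(\<integral>\<^sup>+u. f u s \<partial>lborel) = emeasure lborel (cball (0::'a) 1) - emeasure lborel (cball (0::'a) s)"
      using True by (simp, intro emeasure_Diff) (auto simp: emeasure_cball)
    also have "\<dots> = ennreal (k * (1 - s ^ DIM('a)))"
      using True k by (simp add: emeasure_cball k_def ennreal_minus[symmetric] algebra_simps power_le_one)
    finally show ?thesis using True by simp
  next
    case False
    then have "(\<lambda>u. f u s) = (\<lambda>_. 0)"
      unfolding f_def by (auto simp: indicator_def fun_eq_iff)
    then show ?thesis using False by simp
  qed
  have "(\<integral>\<^sup>+u. ennreal (norm u) * indicator (cball (0::'a) 1) u \<partial>lborel)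
      = (\<integral>\<^sup>+u. (\<integral>\<^sup>+s. f u s \<partial>lborel) \<partial>lborel)"
    by (simp add: norm_layers)
  also have "\<dots> = (\<integral>\<^sup>+s. (\<integral>\<^sup>+u. f u s \<partial>lborel) \<partial>lborel)"
    using pair_sigma_finite.Fubini'[OF _ f_measurable] by (simp add: pair_sigma_finite_def sigma_finite_lborel)
  also have "\<dots> = ennreal (k * (real DIM('a) / (real DIM('a) + 1)))"
    using nn_integral_one_minus_power[of k "DIM('a)"] k by (simp add: shell_volume)
  moreover have "emeasure lborel (cball (0::'a) 1) = ennreal k"
    using emeasure_cball[of 1 "0::'a"] by (simp add: k_def)
  ultimately show ?thesis
    using k by (simp add: nn_integral_uniform_measure divide_ennreal ennreal_mult'[symmetric])
qed

lemma bounded_radial_set_eq_ball_or_cball: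
  fixes D :: "'a::real_normed_vector set"
  assumes radial: "\<And>z w. z \<in> D \<Longrightarrow> norm w \<le> norm z \<Longrightarrow> w \<in> D"
    and "bounded D" and "z \<in> D"
  obtains m where "norm z \<le> m" "D = ball 0 m \<or> D = cball 0 m"
proof -
  have bdd: "bdd_above (norm ` D)"
    using \<open>bounded D\<close> by (simp add: bounded_imp_bdd_above bounded_norm_comp)
  define m where "m = Sup (norm ` D)"
  have le_m: "norm w \<le> m" if "w \<in> D" for w
    unfolding m_def using bdd that by (auto intro: cSup_upper)
  have "ball 0 m \<subseteq> D"
  proof
    fix w :: 'a assume "w \<in> ball 0 m"
    then have "norm w < Sup (norm ` D)" by (simp add: m_def)
    then obtain v where "v \<in> D" "norm w < norm v"
      using less_cSup_iff[of "norm ` D"] bdd \<open>z \<in> D\<close> by auto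
    then show "w \<in> D" using radial by auto
  qed
  moreover have "D \<subseteq> cball 0 m"
    using le_m by auto
  moreover have "cball 0 m \<subseteq> D" if "v \<in> D" "norm v = m" for v
    using radial that by auto
  ultimately have "D = ball 0 m \<or> D = cball 0 m"
    using le_m by (force simp: subset_iff)
  then show ?thesis
    using that le_m \<open>z \<in> D\<close> by blast
qed

lemma bounded_radial_set_fmeasurable:
  fixes D :: "'a::euclidean_space set"
  assumes "\<And>z w. z \<in> D \<Longrightarrow> norm w \<le> norm z \<Longrightarrow> w \<in> D" and "bounded D"
  shows "D \<in> fmeasurable lborel"
proof (cases "D = {}")
  case False
  then obtain z where "z \<in> D" by blast
  with assms obtain m where "D = ball 0 m \<or> D = cball 0 m"
    by (rule bounded_radial_set_eq_ball_or_cball)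
  then show ?thesis
    using emeasure_lborel_ball_finite emeasure_lborel_cball_finite by (auto simp: fmeasurable_def)
qed auto

lemma uniform_measure_bounded_radial_set:
  fixes D :: "'a::euclidean_space set"
  assumes "\<And>z w. z \<in> D \<Longrightarrow> norm w \<le> norm z \<Longrightarrow> w \<in> D" and "bounded D"
    and "z \<in> D" "z \<noteq> 0"
  shows "uniform_measure lborel D = distr (uniform_measure lborel (cball 0 1)) borel
      (\<lambda>u. (measure lborel D / measure lborel (cball (0::'a) 1)) powr (1 / DIM('a)) *\<^sub>R u)"
proof -
  obtain m where m: "norm z \<le> m" "D = ball 0 m \<or> D = cball 0 m"
    using assms(1-3) by (rule bounded_radial_set_eq_ball_or_cball)
  have "m > 0"
    using m(1) \<open>z \<noteq> 0\<close> by (meson less_le_trans zero_less_norm_iff)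
  have "measure lborel D = unit_ball_vol (real DIM('a)) * m ^ DIM('a)"
    using m(2) \<open>m > 0\<close> by (auto simp: measure_def emeasure_ball emeasure_cball)
  moreover have "measure lborel (cball (0::'a) 1) = unit_ball_vol (real DIM('a))"
    by (simp add: measure_def emeasure_cball)
  ultimately have "(measure lborel D / measure lborel (cball (0::'a) 1)) powr (1 / DIM('a)) = m"
    using \<open>m > 0\<close> by (simp add: powr_realpow[symmetric] powr_powr)
  moreover have "ball 0 m \<subseteq> D" "D \<subseteq> cball 0 m" "D \<in> sets borel"
    using m(2) by auto
  ultimately show ?thesis
    using uniform_measure_eq_distr_scaleR_unit_ball[OF \<open>m > 0\<close>] by simp
qed

section \<open>The slice kernel and the synchronous coupling\<close>

lemma wasserstein_distr_le_nn_integral: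
  fixes f g :: "'b \<Rightarrow> 'a::euclidean_space"
  assumes f: "f \<in> M \<rightarrow>\<^sub>M borel" and g: "g \<in> M \<rightarrow>\<^sub>M borel"
  shows "wasserstein (distr M borel f) (distr M borel g) \<le> (\<integral>\<^sup>+\<omega>. ennreal (norm (f \<omega> - g \<omega>)) \<partial>M)"
proof -
  have fg: "(\<lambda>\<omega>. (f \<omega>, g \<omega>)) \<in> M \<rightarrow>\<^sub>M borel \<Otimes>\<^sub>M borel"
    using f g by measurable
  define \<gamma> where "\<gamma> = distr M (borel \<Otimes>\<^sub>M borel) (\<lambda>\<omega>. (f \<omega>, g \<omega>))"
  have "\<gamma> \<in> couplings (distr M borel f) (distr M borel g)"
    using fg unfolding couplings_def \<gamma>_def by (simp add: distr_distr comp_def)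
  then have "wasserstein (distr M borel f) (distr M borel g) \<le> (\<integral>\<^sup>+p. ennreal (norm (fst p - snd p)) \<partial>\<gamma>)"
    unfolding wasserstein_def by (rule INF_lower)
  also have "\<dots> = (\<integral>\<^sup>+\<omega>. ennreal (norm (f \<omega> - g \<omega>)) \<partial>M)"
    unfolding \<gamma>_def using fg by (simp add: nn_integral_distr)
  finally show ?thesis .
qed

lemma nn_integral_Icc_rescale:
  fixes h :: "real \<Rightarrow> ennreal"
  assumes "c > 0" and [measurable]: "h \<in> borel_measurable borel"
  shows "ennreal (1 / c) * (\<integral>\<^sup>+t\<in>{0..c}. h t \<partial>lborel) = (\<integral>\<^sup>+r\<in>{0..1}. h (r * c) \<partial>lborel)"
proof -
  have "(\<integral>\<^sup>+t\<in>{0..c}. h t \<partial>lborel)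
      = ennreal c * (\<integral>\<^sup>+r. h (0 + c * r) * indicator {0..c} (0 + c * r) \<partial>lborel)"
    using \<open>c > 0\<close> by (subst nn_integral_real_affine[where c=c and t=0]) auto
  also have "(\<lambda>r. h (0 + c * r) * indicator {0..c} (0 + c * r)) = (\<lambda>r. h (r * c) * indicator {0..1} r)"
    using \<open>c > 0\<close> by (auto simp: fun_eq_iff indicator_def mult.commute zero_le_mult_iff)
  finally show ?thesis
    using \<open>c > 0\<close> by (simp add: mult.assoc[symmetric] ennreal_mult''[symmetric])
qed

lemma slice_kernel_eq_distr:
  fixes \<rho> :: "'a::euclidean_space \<Rightarrow> real" and T :: "real \<Rightarrow> 'b \<Rightarrow> 'a"
  assumes "\<rho> x > 0" and Q: "sigma_finite_measure Q"
    and T: "(\<lambda>(t, u). T t u) \<in> borel \<Otimes>\<^sub>M Q \<rightarrow>\<^sub>M borel"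
    and unif: "AE t in lborel. 0 < t \<and> t \<le> \<rho> x \<longrightarrow> unif_level G \<rho> t = distr Q borel (T t)"
  shows "slice_kernel G \<rho> x
    = distr (uniform_measure lborel {0..1} \<Otimes>\<^sub>M Q) borel (\<lambda>(r, u). T (r * \<rho> x) u)"
    (is "_ = distr ?P borel ?F")
proof -
  have F: "?F \<in> ?P \<rightarrow>\<^sub>M borel"
    using measurable_compose[OF _ T, of "\<lambda>(r, u). (r * \<rho> x, u)"] by (simp add: case_prod_beta')
  have T_t: "T t \<in> Q \<rightarrow>\<^sub>M borel" for t
    using measurable_Pair2[OF T, of t] by simp
  define U where "U A = ennreal (1 / \<rho> x) * (\<integral>\<^sup>+t\<in>{0..\<rho> x}. emeasure (unif_level G \<rho> t) A \<partial>lborel)"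
    for A
  have "U A = emeasure (distr ?P borel ?F) A" if A: "A \<in> sets borel" for A
  proof -
    define g where "g t = emeasure Q (T t -` A \<inter> space Q)" for t
    have "(\<lambda>t. emeasure Q (Pair t -` ((\<lambda>(t, u). T t u) -` A \<inter> space (borel \<Otimes>\<^sub>M Q)))) \<in> borel_measurable borel"
      using sigma_finite_measure.measurable_emeasure_Pair[OF Q measurable_sets[OF T A]] .
    then have g[measurable]: "g \<in> borel_measurable borel"
      by (simp add: g_def[abs_def] space_pair_measure vimage_def Int_def)
    have "AE t in lborel. emeasure (unif_level G \<rho> t) A * indicator {0..\<rho> x} t = g t * indicator {0..\<rho> x} t"
      using unif AE_lborel_singleton[of 0]
      by eventually_elim (use A T_t in \<open>auto simp: g_def emeasure_distr indicator_def\<close>)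
    then have "U A = ennreal (1 / \<rho> x) * (\<integral>\<^sup>+t\<in>{0..\<rho> x}. g t \<partial>lborel)"
      unfolding U_def by (simp add: nn_integral_cong_AE)
    also have "\<dots> = (\<integral>\<^sup>+r\<in>{0..1}. g (r * \<rho> x) \<partial>lborel)"
      using \<open>\<rho> x > 0\<close> by (rule nn_integral_Icc_rescale) simp
    also have "\<dots> = (\<integral>\<^sup>+r. g (r * \<rho> x) \<partial>uniform_measure lborel {0..1})"
      by (subst nn_integral_uniform_measure) (auto simp: divide_ennreal_def)
    also have "\<dots> = (\<integral>\<^sup>+r. emeasure Q (Pair r -` (?F -` A \<inter> space ?P)) \<partial>uniform_measure lborel {0..1})"
      unfolding g_def by (intro nn_integral_cong arg_cong[where f="emeasure Q"]) (auto simp: space_pair_measure)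
    also have "\<dots> = emeasure ?P (?F -` A \<inter> space ?P)"
      using measurable_sets[OF F A] by (rule sigma_finite_measure.emeasure_pair_measure_alt[OF Q, symmetric])
    also have "\<dots> = emeasure (distr ?P borel ?F) A"
      using A F by (simp add: emeasure_distr)
    finally show ?thesis .
  qed
  then have "measure_of UNIV (sets borel) U = measure_of UNIV (sets borel) (emeasure (distr ?P borel ?F))"
    by (intro measure_of_eq) (auto simp: sets.sigma_sets_eq[of borel, simplified])
  also have "\<dots> = distr ?P borel ?F"
    using measure_of_of_measure[of "distr ?P borel ?F"] by simp
  finally show ?thesis
    by (simp add: slice_kernel_def U_def[abs_def])
qed

lemma sigma_finite_uniform_measure_unit_ball:
  "sigma_finite_measure (uniform_measure lborel (cball (0::'a::euclidean_space) 1))"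
proof -
  have "prob_space (uniform_measure lborel (cball (0::'a) 1))"
    using emeasure_cball[of 1 "0::'a"]
    by (intro prob_space_uniform_measure) auto
  then show ?thesis
    by (rule prob_space_imp_sigma_finite)
qed

lemma wasserstein_distr_scaleR_uniform_le:
  fixes a b :: "real \<Rightarrow> real"
  assumes [measurable]: "a \<in> borel_measurable borel" "b \<in> borel_measurable borel"
  defines "P \<equiv> uniform_measure lborel {0..1} \<Otimes>\<^sub>M uniform_measure lborel (cball (0::'a::euclidean_space) 1)"
  shows "wasserstein (distr P borel (\<lambda>(r, u). a r *\<^sub>R u)) (distr P borel (\<lambda>(r, u). b r *\<^sub>R u))
    \<le> ennreal (real DIM('a) / (real DIM('a) + 1)) * (\<integral>\<^sup>+r\<in>{0..1}. ennreal \<bar>a r - b r\<bar> \<partial>lborel)"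
proof -
  let ?U = "uniform_measure lborel (cball (0::'a) 1)"
  have "wasserstein (distr P borel (\<lambda>(r, u). a r *\<^sub>R u)) (distr P borel (\<lambda>(r, u). b r *\<^sub>R u))
      \<le> (\<integral>\<^sup>+p. ennreal (norm ((\<lambda>(r, u). a r *\<^sub>R u) p - (\<lambda>(r, u). b r *\<^sub>R u) p)) \<partial>P)"
    unfolding P_def by (intro wasserstein_distr_le_nn_integral) measurable
  also have "\<dots> = (\<integral>\<^sup>+p. ennreal \<bar>a (fst p) - b (fst p)\<bar> * ennreal (norm (snd p)) \<partial>P)"
    by (intro nn_integral_cong) (auto simp: ennreal_mult'[symmetric] scaleR_diff_left[symmetric])
  also have "\<dots> = (\<integral>\<^sup>+r. (\<integral>\<^sup>+u. ennreal \<bar>a r - b r\<bar> * ennreal (norm u) \<partial>?U) \<partial>uniform_measure lborel {0..1})"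
    unfolding P_def
    by (subst sigma_finite_measure.nn_integral_fst[OF sigma_finite_uniform_measure_unit_ball, symmetric])
       (simp_all add: case_prod_beta')
  also have "\<dots> = (\<integral>\<^sup>+r. ennreal \<bar>a r - b r\<bar> * ennreal (real DIM('a) / (real DIM('a) + 1)) \<partial>uniform_measure lborel {0..1})"
    by (simp add: nn_integral_cmult nn_integral_norm_uniform_unit_ball)
  also have "\<dots> = ennreal (real DIM('a) / (real DIM('a) + 1)) * (\<integral>\<^sup>+r\<in>{0..1}. ennreal \<bar>a r - b r\<bar> \<partial>lborel)"
    by (subst nn_integral_uniform_measure)
       (auto simp: divide_ennreal_def nn_integral_cmult[symmetric] ac_simps intro!: nn_integral_cong)
  finally show ?thesis .
qed

section \<open>Radially log-concave densities\<close>

locale radial_log_concave_density =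
  fixes R :: ereal and \<phi> :: "real \<Rightarrow> real" and G :: "'a::euclidean_space set" and \<rho> :: "'a \<Rightarrow> real"
  assumes R_pos: "R > 0"
    and \<phi>_strict_mono: "strict_mono_on {t. 0 \<le> t \<and> ereal t < R} \<phi>"
    and \<phi>_convex: "convex_on {t. 0 \<le> t \<and> ereal t < R} \<phi>"
    and G_eq: "G = {z. ereal (norm z) < R}"
    and \<rho>_eq: "\<rho> = (\<lambda>z. exp (- \<phi> (norm z)))"
begin

abbreviation radii :: "real set" where "radii \<equiv> {t. 0 \<le> t \<and> ereal t < R}"

lemma radii_downward: "s \<in> radii \<Longrightarrow> 0 \<le> r \<Longrightarrow> r \<le> s \<Longrightarrow> r \<in> radii"
  by (auto intro: le_less_trans[of "ereal r" "ereal s"])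

lemma zero_in_radii: "0 \<in> radii"
  using R_pos by (simp add: zero_ereal_def)

lemma mem_level_set_iff: "z \<in> level_set G \<rho> t \<longleftrightarrow> ereal (norm z) < R \<and> t \<le> exp (- \<phi> (norm z))"
  by (simp add: level_set_def G_eq \<rho>_eq)

lemma mem_level_set_iff_ln:
  "t > 0 \<Longrightarrow> z \<in> level_set G \<rho> t \<longleftrightarrow> ereal (norm z) < R \<and> \<phi> (norm z) \<le> - ln t"
  using ln_le_cancel_iff[of t "exp (- \<phi> (norm z))"] by (auto simp: mem_level_set_iff)

lemma level_set_radial:
  assumes "z \<in> level_set G \<rho> t" "norm w \<le> norm z"
  shows "w \<in> level_set G \<rho> t"
proof -
  have "norm z \<in> radii" "norm w \<in> radii"
    using assms radii_downward[of "norm z" "norm w"] by (auto simp: mem_level_set_iff)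
  then have "\<phi> (norm w) \<le> \<phi> (norm z)"
    using strict_mono_on_leD[OF \<phi>_strict_mono] assms(2) by blast
  then have "exp (- \<phi> (norm z)) \<le> exp (- \<phi> (norm w))"
    by simp
  moreover have "t \<le> exp (- \<phi> (norm z))"
    using assms(1) by (simp add: mem_level_set_iff)
  ultimately have "t \<le> exp (- \<phi> (norm w))"
    by linarith
  then show ?thesis
    using \<open>norm w \<in> radii\<close> by (simp add: mem_level_set_iff)
qed

lemma \<rho>_le_\<rho>_0: "z \<in> G \<Longrightarrow> \<rho> z \<le> \<rho> 0"
  using strict_mono_on_leD[OF \<phi>_strict_mono, of 0 "norm z"] zero_in_radii by (simp add: G_eq \<rho>_eq)

(* Convexity bounds phi on [0, s0] by its chord, so phi has no jump at 0. *)
lemma \<phi>_right_continuous_at_0: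
  assumes "e > 0"
  obtains s where "s > 0" "s \<in> radii" "\<phi> s < \<phi> 0 + e"
proof -
  obtain s0 where s0: "0 < ereal s0" "ereal s0 < R"
    using ereal_dense2[OF R_pos] by blast
  then have "s0 > 0" "s0 \<in> radii"
    by (auto simp: zero_ereal_def)
  have gap: "\<phi> s0 > \<phi> 0"
    using strict_mono_onD[OF \<phi>_strict_mono zero_in_radii \<open>s0 \<in> radii\<close> \<open>s0 > 0\<close>] .
  define s where "s = min s0 (e * s0 / (2 * (\<phi> s0 - \<phi> 0)))"
  have "s > 0" "s \<le> s0"
    using \<open>s0 > 0\<close> \<open>e > 0\<close> gap by (auto simp: s_def)
  have "convex_on {0..s0} \<phi>"
    using \<phi>_convex by (rule convex_on_subset) (auto intro: le_less_trans[OF _ s0(2)])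
  then have "\<phi> s \<le> (\<phi> s0 - \<phi> 0) / s0 * s + \<phi> 0"
    using convex_onD_Icc'[of 0 s0 \<phi> s] \<open>s > 0\<close> \<open>s \<le> s0\<close> by simp
  also have "(\<phi> s0 - \<phi> 0) / s0 * s \<le> (\<phi> s0 - \<phi> 0) / s0 * (e * s0 / (2 * (\<phi> s0 - \<phi> 0)))"
    using \<open>s0 > 0\<close> gap by (intro mult_left_mono) (auto simp: s_def)
  also have "\<dots> = e / 2"
    using \<open>s0 > 0\<close> gap by (simp add: field_simps)
  finally have "\<phi> s < \<phi> 0 + e"
    using \<open>e > 0\<close> by simp
  moreover have "s \<in> radii"
    using \<open>s > 0\<close> \<open>s \<le> s0\<close> by (intro radii_downward[OF \<open>s0 \<in> radii\<close>]) auto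
  ultimately show ?thesis
    using that \<open>s > 0\<close> by blast
qed

lemma \<phi>_linear_growth:
  assumes "R = \<infinity>" and "s \<ge> 1"
  shows "\<phi> 0 + s * (\<phi> 1 - \<phi> 0) \<le> \<phi> s"
proof (cases "s = 1")
  case False
  then have "(\<phi> 0 - \<phi> 1) / (0 - 1) \<le> (\<phi> 0 - \<phi> s) / (0 - s)"
    using convex_on_slope_le(1)[OF \<phi>_convex, of 0 s 1] assms by simp
  then show ?thesis
    using \<open>s \<ge> 1\<close> by (simp add: field_simps)
qed simp

lemma bounded_level_set:
  assumes "t > 0"
  shows "bounded (level_set G \<rho> t)"
proof (cases R)
  case (real r)
  then have "level_set G \<rho> t \<subseteq> cball 0 r"
    by (auto simp: mem_level_set_iff)
  then show ?thesis
    using bounded_cball bounded_subset by blast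
next
  case PInf
  have gap: "\<phi> 1 > \<phi> 0"
    using strict_mono_onD[OF \<phi>_strict_mono] PInf by simp
  define M where "M = max 1 ((- ln t - \<phi> 0) / (\<phi> 1 - \<phi> 0))"
  have "norm z \<le> M" if "z \<in> level_set G \<rho> t" for z
  proof (rule ccontr)
    assume "\<not> norm z \<le> M"
    then have "norm z \<ge> 1" "(- ln t - \<phi> 0) / (\<phi> 1 - \<phi> 0) < norm z"
      by (auto simp: M_def)
    then have "- ln t - \<phi> 0 < norm z * (\<phi> 1 - \<phi> 0)"
      using gap by (simp add: pos_divide_less_eq)
    moreover have "\<phi> (norm z) \<le> - ln t"
      using that \<open>t > 0\<close> by (simp add: mem_level_set_iff_ln)
    ultimately show False
      using \<open>norm z \<ge> 1\<close> \<phi>_linear_growth[OF PInf \<open>norm z \<ge> 1\<close>] by linarith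
  qed
  then show ?thesis
    by (auto simp: bounded_iff)
next
  case MInf
  then show ?thesis using R_pos by simp
qed

lemma level_set_fmeasurable: "t > 0 \<Longrightarrow> level_set G \<rho> t \<in> fmeasurable lborel"
  by (rule bounded_radial_set_fmeasurable[OF level_set_radial bounded_level_set])

lemma level_set_contains_nonzero:
  assumes "0 < t" "t < \<rho> 0"
  obtains z where "z \<in> level_set G \<rho> t" "z \<noteq> 0"
proof -
  have "ln t < - \<phi> 0"
    using assms ln_less_cancel_iff[of t "\<rho> 0"] by (simp add: \<rho>_eq)
  then obtain s where s: "s > 0" "s \<in> radii" "\<phi> s < - ln t"
    using \<phi>_right_continuous_at_0[of "- ln t - \<phi> 0"] by auto
  obtain e :: 'a where "e \<in> Basis"
    using nonempty_Basis by blast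
  then have "s *\<^sub>R e \<in> level_set G \<rho> t" "s *\<^sub>R e \<noteq> 0"
    using s \<open>t > 0\<close> by (auto simp: mem_level_set_iff_ln)
  then show ?thesis
    using that by blast
qed

end

context radial_log_concave_density
begin

(* For t <= 0 the level set is all of G, whose measure may be infinite; the guard keeps
   level_radius antitone on the positive reals and hence measurable. *)
definition level_radius :: "real \<Rightarrow> real" where
  "level_radius t = (if 0 < t
     then (level_fun G \<rho> t / measure lborel (cball (0::'a) 1)) powr (1 / DIM('a)) else 0)"

lemma unif_level_eq_distr_level_radius:
  assumes "0 < t" "t < \<rho> 0"
  shows "unif_level G \<rho> t = distr (uniform_measure lborel (cball 0 1)) borel (\<lambda>u. level_radius t *\<^sub>R u)"
proof -
  obtain z where "z \<in> level_set G \<rho> t" "z \<noteq> 0"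
    using level_set_contains_nonzero[OF assms] .
  then show ?thesis
    using uniform_measure_bounded_radial_set[OF level_set_radial bounded_level_set[OF \<open>0 < t\<close>]] \<open>0 < t\<close>
    by (simp add: unif_level_def level_radius_def level_fun_def)
qed

lemma level_radius_antimono:
  assumes "0 < s" "s \<le> t"
  shows "level_radius t \<le> level_radius s"
proof -
  have "level_set G \<rho> t \<subseteq> level_set G \<rho> s"
    using \<open>s \<le> t\<close> by (auto simp: level_set_def)
  moreover have "level_set G \<rho> t \<in> sets lborel"
    using level_set_fmeasurable[of t] assms by (simp add: fmeasurable_def)
  ultimately have "level_fun G \<rho> t \<le> level_fun G \<rho> s"
    unfolding level_fun_def using level_set_fmeasurable[OF \<open>0 < s\<close>] by (rule measure_mono_fmeasurable)
  then show ?thesis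
    using assms by (auto simp: level_radius_def level_fun_def intro!: powr_mono2 divide_right_mono)
qed

lemma level_radius_measurable [measurable]: "level_radius \<in> borel_measurable borel"
proof -
  have "mono_on {..0} (\<lambda>t. - level_radius t)"
    by (auto simp: mono_on_def level_radius_def)
  moreover have "mono_on {0<..} (\<lambda>t. - level_radius t)"
    by (auto simp: mono_on_def intro: level_radius_antimono)
  ultimately have "(\<lambda>t. - level_radius t) \<in> borel_measurable borel"
    by (intro borel_measurable_piecewise_mono[of "{{..0}, {0<..}}"]) auto
  then show ?thesis
    using borel_measurable_uminus[of "\<lambda>t. - level_radius t"] by simp
qed

lemma slice_kernel_eq_distr_level_radius:
  assumes "x \<in> G"
  shows "slice_kernel G \<rho> x = distr (uniform_measure lborel {0..1} \<Otimes>\<^sub>M uniform_measure lborel (cball 0 1))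
    borel (\<lambda>(r, u). level_radius (r * \<rho> x) *\<^sub>R u)"
proof (rule slice_kernel_eq_distr)
  show "\<rho> x > 0"
    by (simp add: \<rho>_eq)
  (* Only the top level t = rho 0 can be the degenerate level set {0}. *)
  show "AE t in lborel. 0 < t \<and> t \<le> \<rho> x \<longrightarrow>
      unif_level G \<rho> t = distr (uniform_measure lborel (cball 0 1)) borel (\<lambda>u. level_radius t *\<^sub>R u)"
    using AE_lborel_singleton[of "\<rho> 0"]
  proof eventually_elim
    case (elim t)
    then show ?case
      using \<rho>_le_\<rho>_0[OF assms] by (auto intro: unif_level_eq_distr_level_radius)
  qed
qed (simp_all add: sigma_finite_uniform_measure_unit_ball)

end

context radial_log_concave_density
begin

lemma nn_integral_level_fun_root_diff:
  assumes "a > 0" "b > 0"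
  shows "(\<integral>\<^sup>+r\<in>{0..1}. ennreal \<bar>level_fun G \<rho> (r * a) powr (1 / DIM('a))
                                - level_fun G \<rho> (r * b) powr (1 / DIM('a))\<bar> \<partial>lborel)
    = ennreal (measure lborel (cball (0::'a) 1) powr (1 / DIM('a)))
      * (\<integral>\<^sup>+r\<in>{0..1}. ennreal \<bar>level_radius (r * a) - level_radius (r * b)\<bar> \<partial>lborel)"
proof -
  let ?e = "1 / real DIM('a)" and ?\<kappa> = "measure lborel (cball (0::'a) 1)"
  have "?\<kappa> > 0"
    by (simp add: measure_def emeasure_cball)
  have "\<bar>level_fun G \<rho> (r * a) powr ?e - level_fun G \<rho> (r * b) powr ?e\<bar>
      = ?\<kappa> powr ?e * \<bar>level_radius (r * a) - level_radius (r * b)\<bar>" if "r \<in> {0<..1}" for r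
  proof -
    have "level_fun G \<rho> (r * c) powr ?e = ?\<kappa> powr ?e * level_radius (r * c)" if "c > 0" for c
      using \<open>r \<in> {0<..1}\<close> \<open>c > 0\<close> \<open>?\<kappa> > 0\<close>
      by (simp add: level_radius_def powr_divide level_fun_def)
    then show ?thesis
      using assms \<open>?\<kappa> > 0\<close> by (simp add: abs_mult right_diff_distrib[symmetric])
  qed
  then have "(\<integral>\<^sup>+r\<in>{0..1}. ennreal \<bar>level_fun G \<rho> (r * a) powr ?e - level_fun G \<rho> (r * b) powr ?e\<bar> \<partial>lborel)
      = (\<integral>\<^sup>+r\<in>{0..1}. ennreal (?\<kappa> powr ?e) * ennreal \<bar>level_radius (r * a) - level_radius (r * b)\<bar> \<partial>lborel)"
    using AE_lborel_singleton[of 0]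
    by (intro nn_integral_cong_AE) (auto simp: indicator_def ennreal_mult[symmetric])
  also have "\<dots> = ennreal (?\<kappa> powr ?e)
      * (\<integral>\<^sup>+r\<in>{0..1}. ennreal \<bar>level_radius (r * a) - level_radius (r * b)\<bar> \<partial>lborel)"
    by (subst nn_integral_cmult[symmetric]) (auto simp: ac_simps)
  finally show ?thesis .
qed

end

theorem mainTheorem3:
  fixes R :: ereal and \<phi> :: "real \<Rightarrow> real" and x y :: "'a::euclidean_space"
  assumes "R > 0"
    and "strict_mono_on {t. 0 \<le> t \<and> ereal t < R} \<phi>"
    and "convex_on {t. 0 \<le> t \<and> ereal t < R} \<phi>"
    and "G = {z::'a. ereal (norm z) < R}"
    and "\<rho> = (\<lambda>z::'a. exp (- \<phi> (norm z)))"
    and "x \<in> G" and "y \<in> G"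
  shows "wasserstein (slice_kernel G \<rho> x) (slice_kernel G \<rho> y)
     \<le> ennreal (real DIM('a) / (real DIM('a) + 1)
                * (1 / measure lborel (cball (0::'a) 1) powr (1 / real DIM('a))))
       * (\<integral>\<^sup>+ r \<in> {0..1}. ennreal \<bar>level_fun G \<rho> (r * \<rho> x) powr (1 / real DIM('a))
                                  - level_fun G \<rho> (r * \<rho> y) powr (1 / real DIM('a))\<bar> \<partial>lborel)"
proof -
  interpret radial_log_concave_density R \<phi> G \<rho>
    using assms(1-5) by unfold_locales
  let ?c = "measure lborel (cball (0::'a) 1) powr (1 / real DIM('a))"
  let ?I = "\<integral>\<^sup>+r\<in>{0..1}. ennreal \<bar>level_radius (r * \<rho> x) - level_radius (r * \<rho> y)\<bar> \<partial>lborel"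
  have "?c > 0"
    by (simp add: measure_def emeasure_cball)
  have "wasserstein (slice_kernel G \<rho> x) (slice_kernel G \<rho> y)
      \<le> ennreal (real DIM('a) / (real DIM('a) + 1)) * ?I"
    unfolding slice_kernel_eq_distr_level_radius[OF assms(6)] slice_kernel_eq_distr_level_radius[OF assms(7)]
    by (rule wasserstein_distr_scaleR_uniform_le) simp_all
  also have "\<dots> = ennreal (real DIM('a) / (real DIM('a) + 1) * (1 / ?c)) * (ennreal ?c * ?I)"
    using \<open>?c > 0\<close> by (simp add: ennreal_mult'[symmetric] mult.assoc[symmetric])
  also have "ennreal ?c * ?I = (\<integral>\<^sup>+ r \<in> {0..1}. ennreal \<bar>level_fun G \<rho> (r * \<rho> x) powr (1 / real DIM('a))
                                  - level_fun G \<rho> (r * \<rho> y) powr (1 / real DIM('a))\<bar> \<partial>lborel)"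
    by (rule nn_integral_level_fun_root_diff[symmetric]) (simp_all add: assms(5))
  finally show ?thesis .
qed

end
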